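(* Let $k\ge 2$, let $H$ be a triangle-free $k$-regular graph, and let $G=\overline{L(H)}$ be the complement of the line graph of $H$. Then the following are equivalent: $G$ is localizable; $G$ is $k$-localizable; $\chi'(H)=k$.
   Context: A clique is strong if it intersects every maximal independent set. A graph is localizable if its vertex set admits a partition into strong cliques, and $k$-localizable if it admits a partition into exactly $k$ strong cliques. $L(H)$ is the line graph of $H$ (vertex set $E(H)$, edges adjacent iff sharing an endpoint). $\chi'(H)$ is the chromatic index of $H$ (minimum number of matchings whose union is $E(H)$). *)

theory Defs
  imports Main
begin

definition is_clique :: "'b set \<Rightarrow> ('b \<Rightarrow> 'b \<Rightarrow> bool) \<Rightarrow> 'b set \<Rightarrow> bool" where
  "is_clique W adj C \<longleftrightarrow> C \<subseteq> W \<and> (\<forall>x\<in>C. \<forall>y\<in>C. x \<noteq> y \<longrightarrow> adj x y)"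

definition is_independent :: "'b set \<Rightarrow> ('b \<Rightarrow> 'b \<Rightarrow> bool) \<Rightarrow> 'b set \<Rightarrow> bool" where
  "is_independent W adj I \<longleftrightarrow> I \<subseteq> W \<and> (\<forall>x\<in>I. \<forall>y\<in>I. x \<noteq> y \<longrightarrow> \<not> adj x y)"

definition is_maximal_independent :: "'b set \<Rightarrow> ('b \<Rightarrow> 'b \<Rightarrow> bool) \<Rightarrow> 'b set \<Rightarrow> bool" where
  "is_maximal_independent W adj I \<longleftrightarrow>
     is_independent W adj I \<and> (\<forall>J. is_independent W adj J \<and> I \<subseteq> J \<longrightarrow> J = I)"

definition is_strong_clique :: "'b set \<Rightarrow> ('b \<Rightarrow> 'b \<Rightarrow> bool) \<Rightarrow> 'b set \<Rightarrow> bool" where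
  "is_strong_clique W adj C \<longleftrightarrow>
     is_clique W adj C \<and> (\<forall>I. is_maximal_independent W adj I \<longrightarrow> C \<inter> I \<noteq> {})"

definition is_partition :: "'b set \<Rightarrow> 'b set set \<Rightarrow> bool" where
  "is_partition W P \<longleftrightarrow> \<Union>P = W \<and> (\<forall>A\<in>P. A \<noteq> {}) \<and>
     (\<forall>A\<in>P. \<forall>B\<in>P. A \<noteq> B \<longrightarrow> A \<inter> B = {})"

definition localizable :: "'b set \<Rightarrow> ('b \<Rightarrow> 'b \<Rightarrow> bool) \<Rightarrow> bool" where
  "localizable W adj \<longleftrightarrow>
     (\<exists>P. is_partition W P \<and> (\<forall>C\<in>P. is_strong_clique W adj C))"

definition k_localizable :: "nat \<Rightarrow> 'b set \<Rightarrow> ('b \<Rightarrow> 'b \<Rightarrow> bool) \<Rightarrow> bool" where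
  "k_localizable k W adj \<longleftrightarrow>
     (\<exists>P. is_partition W P \<and> finite P \<and> card P = k \<and> (\<forall>C\<in>P. is_strong_clique W adj C))"

definition simple_graph :: "'a set \<Rightarrow> 'a set set \<Rightarrow> bool" where
  "simple_graph V E \<longleftrightarrow> finite V \<and> (\<forall>e\<in>E. e \<subseteq> V \<and> card e = 2)"

definition regular :: "nat \<Rightarrow> 'a set \<Rightarrow> 'a set set \<Rightarrow> bool" where
  "regular k V E \<longleftrightarrow> (\<forall>v\<in>V. card {e\<in>E. v \<in> e} = k)"

definition triangle_free :: "'a set \<Rightarrow> 'a set set \<Rightarrow> bool" where
  "triangle_free V E \<longleftrightarrow>
     \<not> (\<exists>x\<in>V. \<exists>y\<in>V. \<exists>z\<in>V. {x,y} \<in> E \<and> {y,z} \<in> E \<and> {x,z} \<in> E)"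

definition line_adj :: "'a set set \<Rightarrow> 'a set \<Rightarrow> 'a set \<Rightarrow> bool" where
  "line_adj E e f \<longleftrightarrow> e \<in> E \<and> f \<in> E \<and> e \<noteq> f \<and> e \<inter> f \<noteq> {}"

definition co_line_adj :: "'a set set \<Rightarrow> 'a set \<Rightarrow> 'a set \<Rightarrow> bool" where
  "co_line_adj E e f \<longleftrightarrow> e \<in> E \<and> f \<in> E \<and> e \<noteq> f \<and> \<not> line_adj E e f"

definition is_matching :: "'a set set \<Rightarrow> 'a set set \<Rightarrow> bool" where
  "is_matching E M \<longleftrightarrow> M \<subseteq> E \<and> (\<forall>e\<in>M. \<forall>f\<in>M. e \<noteq> f \<longrightarrow> e \<inter> f = {})"

definition chromatic_index :: "'a set set \<Rightarrow> nat" where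
  "chromatic_index E = (LEAST n. \<exists>\<M>. finite \<M> \<and> card \<M> = n \<and>
      (\<forall>M\<in>\<M>. is_matching E M) \<and> \<Union>\<M> = E)"

end

theory Submission
  imports Defs
begin

text \<open>
  Cliques of the complement of L(H) are matchings of H and independent sets are pairwise
  intersecting edge sets. In a triangle-free graph a pairwise intersecting edge set lies in a
  star, so the maximal independent sets are exactly the stars of vertices of degree at least 2.
  A matching is therefore a strong clique iff it meets every star. A partition of E(H) into such
  matchings has exactly k classes: at least k because the k edges at a vertex need different
  matchings, at most k because each class contains one of them. Conversely, in an edge colouring
  with k colours every colour class meets every star, since otherwise the remaining k - 1
  classes would cover the k edges at some vertex.
\<close>

definition incident_edges :: "'a set set \<Rightarrow> 'a \<Rightarrow> 'a set set" where
  "incident_edges E v = {e \<in> E. v \<in> e}"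

definition matching_cover :: "'a set set \<Rightarrow> 'a set set set \<Rightarrow> bool" where
  "matching_cover E \<M> \<longleftrightarrow> finite \<M> \<and> (\<forall>M\<in>\<M>. is_matching E M) \<and> \<Union>\<M> = E"

lemma chromatic_index_def':
  "chromatic_index E = (LEAST n. \<exists>\<M>. matching_cover E \<M> \<and> card \<M> = n)"
  unfolding chromatic_index_def matching_cover_def by (intro arg_cong[where f = Least] ext) blast

lemma simple_graph_finite_edges: "simple_graph V E \<Longrightarrow> finite E"
  unfolding simple_graph_def by (meson PowI finite_Pow_iff finite_subset subsetI)

lemma simple_graph_edgeE:
  assumes "simple_graph V E" "e \<in> E"
  obtains x y where "e = {x, y}" "x \<noteq> y" "x \<in> V" "y \<in> V"
proof -
  have "card e = 2" "e \<subseteq> V" using assms unfolding simple_graph_def by auto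
  then show ?thesis using that by (auto simp: card_2_iff)
qed

lemma simple_graph_edge_eq:
  assumes "simple_graph V E" "e \<in> E" "v \<in> e" "w \<in> e" "v \<noteq> w"
  shows "e = {v, w}"
  using simple_graph_edgeE[OF assms(1,2)] assms(3-5) by blast

lemma co_line_clique_iff_matching: "is_clique E (co_line_adj E) C \<longleftrightarrow> is_matching E C"
  unfolding is_clique_def is_matching_def co_line_adj_def line_adj_def by blast

lemma co_line_independent_iff:
  "is_independent E (co_line_adj E) I \<longleftrightarrow> I \<subseteq> E \<and> (\<forall>e\<in>I. \<forall>f\<in>I. e \<noteq> f \<longrightarrow> e \<inter> f \<noteq> {})"
  unfolding is_independent_def co_line_adj_def line_adj_def by blast

lemma co_line_independent_incident_edges:
  "is_independent E (co_line_adj E) (incident_edges E v)"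
  unfolding co_line_independent_iff incident_edges_def by blast

lemma intersecting_edges_common_vertex:
  assumes sg: "simple_graph V E" and tf: "triangle_free V E"
    and IE: "I \<subseteq> E" and meet: "\<forall>e\<in>I. \<forall>f\<in>I. e \<noteq> f \<longrightarrow> e \<inter> f \<noteq> {}"
    and "e \<in> I"
  shows "\<exists>v\<in>V. I \<subseteq> incident_edges E v"
proof (rule ccontr)
  assume no_common: "\<not> ?thesis"
  obtain a b where e: "e = {a, b}" "a \<noteq> b" "a \<in> V" "b \<in> V"
    using simple_graph_edgeE[OF sg] IE \<open>e \<in> I\<close> by blast
  have "\<not> I \<subseteq> incident_edges E a" "\<not> I \<subseteq> incident_edges E b"
    using no_common e by blast+
  then obtain f g where f: "f \<in> I" "a \<notin> f" and g: "g \<in> I" "b \<notin> g"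
    using IE unfolding incident_edges_def by blast
  have "f \<noteq> e" "g \<noteq> e"
    using e f g by auto
  then have "f \<inter> e \<noteq> {}" "g \<inter> e \<noteq> {}"
    using meet \<open>e \<in> I\<close> f(1) g(1) by blast+
  then have "b \<in> f" "a \<in> g"
    using e f g by auto
  then have "f \<inter> g \<noteq> {}"
    using meet f g by blast
  then obtain c where c: "c \<in> f" "c \<in> g"
    by blast
  have "c \<noteq> a" "c \<noteq> b" using c f g by auto
  have "f = {b, c}" "c \<in> V"
    using simple_graph_edgeE[OF sg, of f] IE f(1) c(1) \<open>b \<in> f\<close> \<open>c \<noteq> b\<close> by auto
  moreover have "g = {a, c}"
    using simple_graph_edgeE[OF sg, of g] IE g(1) c(2) \<open>a \<in> g\<close> \<open>c \<noteq> a\<close> by auto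
  ultimately have "{a, b} \<in> E" "{b, c} \<in> E" "{a, c} \<in> E" "c \<in> V"
    using IE e f(1) g(1) \<open>e \<in> I\<close> by auto
  then show False
    using tf e(3,4) \<open>c \<in> V\<close> unfolding triangle_free_def by blast
qed

lemma incident_edges_maximal_independent:
  assumes sg: "simple_graph V E" and tf: "triangle_free V E"
    and "v \<in> V" and deg: "2 \<le> card (incident_edges E v)"
  shows "is_maximal_independent E (co_line_adj E) (incident_edges E v)"
  unfolding is_maximal_independent_def
proof (intro conjI allI impI co_line_independent_incident_edges)
  fix J assume J: "is_independent E (co_line_adj E) J \<and> incident_edges E v \<subseteq> J"
  obtain e1 e2 where e12: "e1 \<in> incident_edges E v" "e2 \<in> incident_edges E v" "e1 \<noteq> e2"
    using deg by (auto simp: card_le_Suc_iff numeral_2_eq_2)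
  have "J \<subseteq> E" "\<forall>e\<in>J. \<forall>f\<in>J. e \<noteq> f \<longrightarrow> e \<inter> f \<noteq> {}"
    using J unfolding co_line_independent_iff by blast+
  moreover have "e1 \<in> J" using J e12 by blast
  ultimately obtain w where Jw: "J \<subseteq> incident_edges E w"
    using intersecting_edges_common_vertex[OF sg tf] by meson
  have "w = v"
  proof (rule ccontr)
    assume "w \<noteq> v"
    have "e1 \<in> E" "v \<in> e1" "w \<in> e1" "e2 \<in> E" "v \<in> e2" "w \<in> e2"
      using Jw J e12 unfolding incident_edges_def by blast+
    then have "e1 = {v, w}" "e2 = {v, w}"
      using simple_graph_edge_eq[OF sg] \<open>w \<noteq> v\<close> by metis+
    then show False using e12 by simp
  qed
  then show "J = incident_edges E v" using J Jw by blast
qed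

lemma maximal_independent_contains_incident_edges:
  assumes sg: "simple_graph V E" and tf: "triangle_free V E" and "E \<noteq> {}"
    and mi: "is_maximal_independent E (co_line_adj E) I"
  shows "\<exists>v\<in>V. incident_edges E v \<subseteq> I"
proof -
  have ind: "I \<subseteq> E" "\<forall>e\<in>I. \<forall>f\<in>I. e \<noteq> f \<longrightarrow> e \<inter> f \<noteq> {}"
    using mi unfolding is_maximal_independent_def co_line_independent_iff by blast+
  have maximal: "J = I" if "is_independent E (co_line_adj E) J" "I \<subseteq> J" for J
    using mi that unfolding is_maximal_independent_def by blast
  obtain e where "e \<in> I"
  proof (cases "I = {}")
    case True
    obtain e where "e \<in> E" using \<open>E \<noteq> {}\<close> by blast
    then have "{e} = I"
      using maximal[of "{e}"] True unfolding co_line_independent_iff by blast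
    then show ?thesis using that by blast
  qed blast
  then obtain v where "v \<in> V" and "I \<subseteq> incident_edges E v"
    using intersecting_edges_common_vertex[OF sg tf ind] by blast
  then show ?thesis
    using maximal[OF co_line_independent_incident_edges] by blast
qed

lemma strong_clique_co_line_iff:
  assumes sg: "simple_graph V E" and tf: "triangle_free V E" and "E \<noteq> {}"
    and deg: "\<forall>v\<in>V. 2 \<le> card (incident_edges E v)"
  shows "is_strong_clique E (co_line_adj E) C \<longleftrightarrow>
           is_matching E C \<and> (\<forall>v\<in>V. C \<inter> incident_edges E v \<noteq> {})"
proof -
  have "(\<forall>I. is_maximal_independent E (co_line_adj E) I \<longrightarrow> C \<inter> I \<noteq> {}) \<longleftrightarrow>
          (\<forall>v\<in>V. C \<inter> incident_edges E v \<noteq> {})"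
  proof
    assume "\<forall>I. is_maximal_independent E (co_line_adj E) I \<longrightarrow> C \<inter> I \<noteq> {}"
    then show "\<forall>v\<in>V. C \<inter> incident_edges E v \<noteq> {}"
      using incident_edges_maximal_independent[OF sg tf] deg by blast
  next
    assume meets: "\<forall>v\<in>V. C \<inter> incident_edges E v \<noteq> {}"
    show "\<forall>I. is_maximal_independent E (co_line_adj E) I \<longrightarrow> C \<inter> I \<noteq> {}"
    proof (intro allI impI)
      fix I assume "is_maximal_independent E (co_line_adj E) I"
      then obtain v where "v \<in> V" "incident_edges E v \<subseteq> I"
        using maximal_independent_contains_incident_edges[OF sg tf \<open>E \<noteq> {}\<close>] by blast
      then show "C \<inter> I \<noteq> {}" using meets by blast
    qed
  qed
  then show ?thesis
    unfolding is_strong_clique_def co_line_clique_iff_matching by blast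
qed

lemma card_incident_edges_le_card_matchings:
  assumes "finite \<M>" "\<forall>M\<in>\<M>. is_matching E M" "incident_edges E v \<subseteq> \<Union>\<M>"
  shows "card (incident_edges E v) \<le> card \<M>"
proof -
  have "\<forall>e\<in>incident_edges E v. \<exists>M. M \<in> \<M> \<and> e \<in> M"
    using assms(3) by blast
  then obtain h where h: "\<forall>e\<in>incident_edges E v. h e \<in> \<M> \<and> e \<in> h e"
    by metis
  have "inj_on h (incident_edges E v)"
  proof (rule inj_onI)
    fix e f assume ef: "e \<in> incident_edges E v" "f \<in> incident_edges E v" "h e = h f"
    then have "v \<in> e \<inter> f" "e \<in> h e" "f \<in> h e" "is_matching E (h e)"
      using h assms(2) unfolding incident_edges_def by auto
    then show "e = f"
      unfolding is_matching_def by blast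
  qed
  moreover have "h ` incident_edges E v \<subseteq> \<M>"
    using h by blast
  ultimately show ?thesis
    using assms(1) by (rule card_inj_on_le)
qed

lemma tight_matching_cover_of_incident_edges:
  assumes "finite \<M>" "\<forall>M\<in>\<M>. is_matching E M" "card \<M> \<le> card (incident_edges E v)" "M \<in> \<M>"
  shows "\<not> incident_edges E v \<subseteq> \<Union>(\<M> - {M})"
proof
  assume "incident_edges E v \<subseteq> \<Union>(\<M> - {M})"
  then have "card (incident_edges E v) \<le> card (\<M> - {M})"
    using assms(1,2) by (intro card_incident_edges_le_card_matchings) auto
  with assms(1,3,4) show False
    using card_Diff1_less[of \<M> M] by linarith
qed

lemma card_le_card_if_disjoint_family_meets:
  assumes "finite S" "\<forall>A\<in>P. A \<inter> S \<noteq> {}" "\<forall>A\<in>P. \<forall>B\<in>P. A \<noteq> B \<longrightarrow> A \<inter> B = {}"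
  shows "card P \<le> card S"
proof -
  have "\<exists>h. \<forall>A\<in>P. h A \<in> A \<inter> S"
    using assms(2) by (intro bchoice) blast
  then obtain h where h: "\<forall>A\<in>P. h A \<in> A \<inter> S"
    by blast
  have "inj_on h P"
  proof (rule inj_onI)
    fix A B assume "A \<in> P" "B \<in> P" "h A = h B"
    then have "h A \<in> A \<inter> B" using h by auto
    then show "A = B" using assms(3) \<open>A \<in> P\<close> \<open>B \<in> P\<close> by blast
  qed
  moreover have "h ` P \<subseteq> S"
    using h by blast
  ultimately show ?thesis
    using assms(1) by (rule card_inj_on_le)
qed

lemma k_localizable_imp_localizable: "k_localizable k W adj \<Longrightarrow> localizable W adj"
  unfolding k_localizable_def localizable_def by blast

lemma chromatic_index_eqI:
  assumes "matching_cover E \<M>" "card \<M> = k"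
    and "\<And>\<N>. matching_cover E \<N> \<Longrightarrow> k \<le> card \<N>"
  shows "chromatic_index E = k"
  unfolding chromatic_index_def' using assms by (intro Least_equality) auto

lemma chromatic_index_attained:
  assumes "finite E"
  obtains \<M> where "matching_cover E \<M>" "card \<M> = chromatic_index E"
proof -
  have "matching_cover E ((\<lambda>e. {e}) ` E)"
    using assms unfolding matching_cover_def is_matching_def by auto
  then have "\<exists>\<M>. matching_cover E \<M> \<and> card \<M> = card ((\<lambda>e. {e}) ` E)"
    by blast
  then have "\<exists>\<M>. matching_cover E \<M> \<and> card \<M> = chromatic_index E"
    unfolding chromatic_index_def' by (rule LeastI)
  then show ?thesis
    using that by blast
qed

locale triangle_free_regular_graph =
  fixes V :: "'a set" and E :: "'a set set" and k :: nat
  assumes simple: "simple_graph V E"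
    and triangle_free: "triangle_free V E"
    and regular: "regular k V E"
    and degree_ge_2: "2 \<le> k"
    and vertex_exists: "V \<noteq> {}"
begin

lemma card_incident_edges: "v \<in> V \<Longrightarrow> card (incident_edges E v) = k"
  using regular unfolding regular_def incident_edges_def by blast

lemma finite_edges: "finite E"
  using simple by (rule simple_graph_finite_edges)

lemma edges_nonempty: "E \<noteq> {}"
proof
  assume "E = {}"
  obtain v where "v \<in> V" using vertex_exists by blast
  then have "card (incident_edges E v) = k" by (rule card_incident_edges)
  with \<open>E = {}\<close> degree_ge_2 show False
    unfolding incident_edges_def by simp
qed

lemma strong_clique_iff:
  "is_strong_clique E (co_line_adj E) C \<longleftrightarrow>
     is_matching E C \<and> (\<forall>v\<in>V. C \<inter> incident_edges E v \<noteq> {})"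
  using strong_clique_co_line_iff[OF simple triangle_free edges_nonempty] card_incident_edges
    degree_ge_2 by simp

lemma card_matching_cover_ge:
  assumes "matching_cover E \<M>"
  shows "k \<le> card \<M>"
proof -
  obtain v where "v \<in> V" using vertex_exists by blast
  have "incident_edges E v \<subseteq> \<Union>\<M>"
    using assms unfolding matching_cover_def incident_edges_def by blast
  then have "card (incident_edges E v) \<le> card \<M>"
    using assms unfolding matching_cover_def by (intro card_incident_edges_le_card_matchings) auto
  then show ?thesis
    using card_incident_edges[OF \<open>v \<in> V\<close>] by simp
qed

lemma matching_cover_of_card_k_partition:
  assumes cover: "matching_cover E \<M>" and "card \<M> = k"
  shows "is_partition E \<M> \<and> (\<forall>M\<in>\<M>. \<forall>v\<in>V. M \<inter> incident_edges E v \<noteq> {})"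
proof -
  have mat: "finite \<M>" "\<forall>M\<in>\<M>. is_matching E M" "\<Union>\<M> = E"
    using cover unfolding matching_cover_def by blast+
  have tight: "\<not> incident_edges E v \<subseteq> \<Union>(\<M> - {M})" if "M \<in> \<M>" "v \<in> V" for M v
    using tight_matching_cover_of_incident_edges[OF mat(1,2)] that \<open>card \<M> = k\<close>
      card_incident_edges by simp
  have meets: "M \<inter> incident_edges E v \<noteq> {}" if "M \<in> \<M>" "v \<in> V" for M v
  proof
    assume "M \<inter> incident_edges E v = {}"
    then have "incident_edges E v \<subseteq> \<Union>(\<M> - {M})"
      using mat(3) unfolding incident_edges_def by blast
    then show False using tight that by blast
  qed
  have "M1 \<inter> M2 = {}" if M12: "M1 \<in> \<M>" "M2 \<in> \<M>" "M1 \<noteq> M2" for M1 M2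
  proof (rule ccontr)
    assume "M1 \<inter> M2 \<noteq> {}"
    then obtain e where e: "e \<in> M1" "e \<in> M2" by blast
    then have "e \<in> E" using mat(3) M12 by blast
    then obtain v w where "e = {v, w}" "v \<in> V"
      by (rule simple_graph_edgeE[OF simple])
    \<comment> \<open>the only edge at v in the matching M2 is e, which also lies in M1\<close>
    have "f \<in> \<Union>(\<M> - {M2})" if f: "f \<in> incident_edges E v" for f
    proof -
      obtain M where M: "M \<in> \<M>" "f \<in> M"
        using f mat(3) unfolding incident_edges_def by blast
      have "f = e \<or> M \<noteq> M2"
      proof (rule disjCI)
        assume "\<not> M \<noteq> M2"
        then have "f \<in> M2" "v \<in> f \<inter> e" using M f \<open>e = {v, w}\<close>
          unfolding incident_edges_def by auto
        then show "f = e"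
          using mat(2) M12(2) e(2) unfolding is_matching_def by blast
      qed
      then show ?thesis
        using M e(1) M12 by blast
    qed
    then show False using tight M12(2) \<open>v \<in> V\<close> by blast
  qed
  moreover have "M \<noteq> {}" if "M \<in> \<M>" for M
    using meets[OF that] vertex_exists by blast
  ultimately show ?thesis
    using meets mat(3) unfolding is_partition_def by blast
qed

lemma localizable_imp_k_localizable:
  assumes "localizable E (co_line_adj E)"
  shows "k_localizable k E (co_line_adj E)"
proof -
  obtain P where P: "is_partition E P" "\<forall>C\<in>P. is_strong_clique E (co_line_adj E) C"
    using assms unfolding localizable_def by blast
  have strong: "is_matching E C" "\<forall>v\<in>V. C \<inter> incident_edges E v \<noteq> {}" if "C \<in> P" for C
    using P(2) that strong_clique_iff by blast+
  have part: "\<Union>P = E" "\<forall>A\<in>P. \<forall>B\<in>P. A \<noteq> B \<longrightarrow> A \<inter> B = {}"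
    using P(1) unfolding is_partition_def by blast+
  have "finite P"
    using finite_edges part(1) by (metis finite_UnionD)
  then have cover: "matching_cover E P"
    using strong(1) part(1) unfolding matching_cover_def by blast
  obtain v where v: "v \<in> V" using vertex_exists by blast
  have "finite (incident_edges E v)"
    using finite_edges unfolding incident_edges_def by simp
  moreover have "\<forall>C\<in>P. C \<inter> incident_edges E v \<noteq> {}"
    using strong(2) v by blast
  ultimately have "card P \<le> card (incident_edges E v)"
    using part(2) by (rule card_le_card_if_disjoint_family_meets)
  then have "card P = k"
    using card_matching_cover_ge[OF cover] card_incident_edges[OF v] by simp
  then show ?thesis
    using P \<open>finite P\<close> unfolding k_localizable_def by blast
qed

lemma k_localizable_imp_chromatic_index:
  assumes "k_localizable k E (co_line_adj E)"
  shows "chromatic_index E = k"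
proof -
  obtain P where P: "is_partition E P" "finite P" "card P = k"
      "\<forall>C\<in>P. is_strong_clique E (co_line_adj E) C"
    using assms unfolding k_localizable_def by blast
  have "\<forall>C\<in>P. is_matching E C"
    using P(4) strong_clique_iff by blast
  then have "matching_cover E P"
    using P(1,2) unfolding matching_cover_def is_partition_def by blast
  then show ?thesis
    using P(3) card_matching_cover_ge by (rule chromatic_index_eqI)
qed

lemma chromatic_index_imp_k_localizable:
  assumes "chromatic_index E = k"
  shows "k_localizable k E (co_line_adj E)"
proof -
  obtain \<M> where cover: "matching_cover E \<M>" and "card \<M> = k"
    using chromatic_index_attained[OF finite_edges] unfolding assms .
  have part: "is_partition E \<M>" and meets: "\<forall>M\<in>\<M>. \<forall>v\<in>V. M \<inter> incident_edges E v \<noteq> {}"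
    using matching_cover_of_card_k_partition[OF cover \<open>card \<M> = k\<close>] by blast+
  have "\<forall>M\<in>\<M>. is_matching E M"
    using cover unfolding matching_cover_def by blast
  then have "\<forall>M\<in>\<M>. is_strong_clique E (co_line_adj E) M"
    using meets by (simp add: strong_clique_iff)
  moreover have "finite \<M>"
    using cover unfolding matching_cover_def by blast
  ultimately show ?thesis
    using part \<open>card \<M> = k\<close> unfolding k_localizable_def by blast
qed

end

theorem mainTheorem7:
  fixes V :: "'a set" and E :: "'a set set" and k :: nat
  assumes "k \<ge> 2"
    and "simple_graph V E"
    and "V \<noteq> {}"
    and "regular k V E"
    and "triangle_free V E"
  shows "(localizable E (co_line_adj E) \<longleftrightarrow> k_localizable k E (co_line_adj E))
       \<and> (k_localizable k E (co_line_adj E) \<longleftrightarrow> chromatic_index E = k)"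
proof -
  interpret triangle_free_regular_graph V E k
    using assms by unfold_locales
  show ?thesis
    using localizable_imp_k_localizable k_localizable_imp_localizable
      k_localizable_imp_chromatic_index chromatic_index_imp_k_localizable by blast
qed

end
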